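(* For any positive integer $r$ the group $H^1(\mathrm{SL}_2^+(\mathbb{Z}/2^r),(\mathbb{Z}/2^r)^2)$ (with tautological action) is annihilated by $2^{r-1}$.
   Context: For $n$ even, $\mathrm{SL}_2^+(\mathbb{Z}/n)$ is the kernel of the composite $\mathrm{SL}_2(\mathbb{Z}/n)\to\mathrm{SL}_2(\mathbb{Z}/2)\cong S_3\to\{\pm1\}$ of reduction modulo $2$ and the signature. *)

theory Defs
  imports "HOL-Combinatorics.Permutations"
begin

text \<open>2x2 matrices over Z/n are represented by quadruples (a,b,c,d) of integers
  in {0..<n}, standing for the matrix with rows (a,b) and (c,d).
  Vectors of (Z/n)^2 are pairs of integers in {0..<n}.\<close>

type_synonym mat2 = "int \<times> int \<times> int \<times> int"
type_synonym vec2 = "int \<times> int"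

definition mat_mult :: "int \<Rightarrow> mat2 \<Rightarrow> mat2 \<Rightarrow> mat2" where
  "mat_mult n A B = (case A of (a,b,c,d) \<Rightarrow> case B of (e,f,g,h) \<Rightarrow>
     ((a*e+b*g) mod n, (a*f+b*h) mod n, (c*e+d*g) mod n, (c*f+d*h) mod n))"

definition SL2 :: "int \<Rightarrow> mat2 set" where
  "SL2 n = {(a,b,c,d). a \<in> {0..<n} \<and> b \<in> {0..<n} \<and> c \<in> {0..<n} \<and> d \<in> {0..<n}
                      \<and> (a*d - b*c) mod n = 1 mod n}"

definition Vec :: "int \<Rightarrow> vec2 set" where
  "Vec n = {0..<n} \<times> {0..<n}"

definition act :: "int \<Rightarrow> mat2 \<Rightarrow> vec2 \<Rightarrow> vec2" where
  "act n A v = (case A of (a,b,c,d) \<Rightarrow> case v of (x,y) \<Rightarrow>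
     ((a*x+b*y) mod n, (c*x+d*y) mod n))"

definition vadd :: "int \<Rightarrow> vec2 \<Rightarrow> vec2 \<Rightarrow> vec2" where
  "vadd n v w = ((fst v + fst w) mod n, (snd v + snd w) mod n)"

definition vsub :: "int \<Rightarrow> vec2 \<Rightarrow> vec2 \<Rightarrow> vec2" where
  "vsub n v w = ((fst v - fst w) mod n, (snd v - snd w) mod n)"

definition vscale :: "int \<Rightarrow> int \<Rightarrow> vec2 \<Rightarrow> vec2" where
  "vscale n k v = ((k * fst v) mod n, (k * snd v) mod n)"

text \<open>Signature of the image of a matrix in SL_2(Z/2) = S_3, where S_3 is the
  symmetric group of the three nonzero vectors of (Z/2)^2. The nonzero vector
  (x,y) is encoded by the natural number x + 2y in {1,2,3}.\<close>

definition decode2 :: "nat \<Rightarrow> vec2" where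
  "decode2 i = (int (i mod 2), int (i div 2))"

definition encode2 :: "vec2 \<Rightarrow> nat" where
  "encode2 v = nat (fst v) + 2 * nat (snd v)"

definition perm_mod2 :: "mat2 \<Rightarrow> nat \<Rightarrow> nat" where
  "perm_mod2 A i = (if i \<in> {1,2,3} then encode2 (act 2 A (decode2 i)) else i)"

definition SL2_plus :: "int \<Rightarrow> mat2 set" where
  "SL2_plus n = {A \<in> SL2 n. sign (perm_mod2 A) = 1}"

definition crossed_hom :: "int \<Rightarrow> mat2 set \<Rightarrow> (mat2 \<Rightarrow> vec2) \<Rightarrow> bool" where
  "crossed_hom n G f \<longleftrightarrow> (\<forall>g\<in>G. f g \<in> Vec n) \<and>
     (\<forall>g\<in>G. \<forall>h\<in>G. f (mat_mult n g h) = vadd n (f g) (act n g (f h)))"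

definition principal_crossed_hom :: "int \<Rightarrow> mat2 set \<Rightarrow> (mat2 \<Rightarrow> vec2) \<Rightarrow> bool" where
  "principal_crossed_hom n G f \<longleftrightarrow> (\<exists>m\<in>Vec n. \<forall>g\<in>G. f g = vsub n (act n g m) m)"

definition H1_annihilated_by :: "int \<Rightarrow> mat2 set \<Rightarrow> int \<Rightarrow> bool" where
  "H1_annihilated_by n G k \<longleftrightarrow>
     (\<forall>f. crossed_hom n G f \<longrightarrow> principal_crossed_hom n G (\<lambda>g. vscale n k (f g)))"

end

theory Submission
  imports Defs "HOL-Number_Theory.Cong"
begin

text \<open>For r \<ge> 2 the matrix -1 reduces to the identity mod 2, so it lies in SL_2^+(Z/2^r),
  and being central it forces 2 f(g) to be a coboundary for every cocycle f; hence 2, and a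
  fortiori 2^(r-1), kills H^1. For r = 1 the group SL_2^+(Z/2) has order 3, which kills H^1 by
  averaging and is a unit mod 2, so H^1 vanishes.\<close>

lemma cong_of_diff_eq:
  fixes A B C D n :: int
  assumes "[A = B] (mod n)" and "C - D = B - A"
  shows "[C = D] (mod n)"
  using assms by (metis cong_iff_dvd_diff cong_sym_eq)

lemma linear_mod_cong:
  fixes a b x y n :: int
  shows "[a * (x mod n) + b * (y mod n) = a * x + b * y] (mod n)"
  by (intro cong_add cong_scalar_left) (simp_all add: cong_def)

lemma vscale_eq_vsub_act_iff:
  fixes n k a b c d m1 m2 :: int
  shows "vscale n k v = vsub n (act n (a, b, c, d) (m1 mod n, m2 mod n)) (m1 mod n, m2 mod n)
     \<longleftrightarrow> [k * fst v = a * m1 + b * m2 - m1] (mod n) \<and>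
         [k * snd v = c * m1 + d * m2 - m2] (mod n)"
proof -
  have "[a * (m1 mod n) + b * (m2 mod n) - m1 = a * m1 + b * m2 - m1] (mod n)"
       "[c * (m1 mod n) + d * (m2 mod n) - m2 = c * m1 + d * m2 - m2] (mod n)"
    by (simp_all add: cong_diff linear_mod_cong)
  then show ?thesis
    by (simp add: vscale_def vsub_def act_def cong_def mod_simps)
qed

lemma crossed_hom_cong:
  fixes n a b c d :: int
  assumes "crossed_hom n G f" and "(a, b, c, d) \<in> G" and "h \<in> G"
  shows "[fst (f (mat_mult n (a, b, c, d) h))
           = fst (f (a, b, c, d)) + a * fst (f h) + b * snd (f h)] (mod n)"
    and "[snd (f (mat_mult n (a, b, c, d) h))
           = snd (f (a, b, c, d)) + c * fst (f h) + d * snd (f h)] (mod n)"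
  using assms unfolding crossed_hom_def
  by (auto simp: vadd_def act_def cong_def mod_simps add.assoc split: prod.splits)

lemma principal_crossed_hom_vscaleI:
  fixes n k m1 m2 :: int
  assumes "n > 0"
    and "\<And>a b c d. (a, b, c, d) \<in> G \<Longrightarrow>
      [k * fst (f (a, b, c, d)) = a * m1 + b * m2 - m1] (mod n) \<and>
      [k * snd (f (a, b, c, d)) = c * m1 + d * m2 - m2] (mod n)"
  shows "principal_crossed_hom n G (\<lambda>g. vscale n k (f g))"
  unfolding principal_crossed_hom_def
proof (intro bexI ballI)
  show "(m1 mod n, m2 mod n) \<in> Vec n"
    using \<open>n > 0\<close> by (simp add: Vec_def)
  fix g assume "g \<in> G"
  then show "vscale n k (f g) = vsub n (act n g (m1 mod n, m2 mod n)) (m1 mod n, m2 mod n)"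
    using assms(2) by (cases g) (simp add: vscale_eq_vsub_act_iff)
qed

lemma H1_annihilated_by_cong:
  fixes n k k' :: int
  assumes "H1_annihilated_by n G k" and "[k = k'] (mod n)"
  shows "H1_annihilated_by n G k'"
proof -
  have "vscale n k = vscale n k'"
    using assms(2) by (auto simp: vscale_def cong_def mod_mult_left_eq[of k, symmetric]
        mod_mult_left_eq[of k', symmetric])
  with assms(1) show ?thesis
    by (simp add: H1_annihilated_by_def)
qed

lemma H1_annihilated_by_mult:
  fixes n k N :: int
  assumes "n > 0" and "H1_annihilated_by n G k"
  shows "H1_annihilated_by n G (N * k)"
  unfolding H1_annihilated_by_def
proof (intro allI impI)
  fix f assume "crossed_hom n G f"
  with assms(2) obtain m1 m2 where m: "(m1, m2) \<in> Vec n"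
    and cob: "\<And>g. g \<in> G \<Longrightarrow> vscale n k (f g) = vsub n (act n g (m1, m2)) (m1, m2)"
    by (auto simp: H1_annihilated_by_def principal_crossed_hom_def)
  from m have "m1 mod n = m1" "m2 mod n = m2"
    by (simp_all add: Vec_def)
  with cob have cob_cong: "[k * fst (f (a, b, c, d)) = a * m1 + b * m2 - m1] (mod n) \<and>
      [k * snd (f (a, b, c, d)) = c * m1 + d * m2 - m2] (mod n)" if "(a, b, c, d) \<in> G" for a b c d
    using that vscale_eq_vsub_act_iff[of n k _ a b c d m1 m2] by metis
  have "[N * k * fst (f (a, b, c, d)) = a * (N * m1) + b * (N * m2) - N * m1] (mod n) \<and>
      [N * k * snd (f (a, b, c, d)) = c * (N * m1) + d * (N * m2) - N * m2] (mod n)"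
    if "(a, b, c, d) \<in> G" for a b c d
  proof -
    have "[N * (k * fst (f (a, b, c, d))) = N * (a * m1 + b * m2 - m1)] (mod n)"
         "[N * (k * snd (f (a, b, c, d))) = N * (c * m1 + d * m2 - m2)] (mod n)"
      using cob_cong[OF that] by (blast intro: cong_scalar_left)+
    then show ?thesis
      by (simp add: algebra_simps)
  qed
  then show "principal_crossed_hom n G (\<lambda>g. vscale n (N * k) (f g))"
    by (rule principal_crossed_hom_vscaleI[OF assms(1)])
qed

text \<open>A scalar matrix z = s I in G commutes with every g, and the cocycle identity for
  f(z g) = f(g z) reads f(z) + s f(g) = f(g) + g f(z), i.e. (1 - s) f(g) = (g - 1)(-f(z)).\<close>

lemma H1_annihilated_by_central_scalar:
  fixes n s :: int
  assumes "n > 0" and z: "(s, 0, 0, s) \<in> G"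
  shows "H1_annihilated_by n G (1 - s)"
  unfolding H1_annihilated_by_def
proof (intro allI impI)
  fix f assume f: "crossed_hom n G f"
  obtain p q where fz: "f (s, 0, 0, s) = (p, q)"
    by fastforce
  have "[(1 - s) * fst (f (a, b, c, d)) = a * - p + b * - q - - p] (mod n) \<and>
      [(1 - s) * snd (f (a, b, c, d)) = c * - p + d * - q - - q] (mod n)"
    if g: "(a, b, c, d) \<in> G" for a b c d
  proof -
    have comm: "mat_mult n (s, 0, 0, s) (a, b, c, d) = mat_mult n (a, b, c, d) (s, 0, 0, s)"
      by (simp add: mat_mult_def mult.commute)
    have fst_eq: "[p + s * fst (f (a, b, c, d)) = fst (f (a, b, c, d)) + a * p + b * q] (mod n)"
      using cong_trans[OF cong_sym[OF crossed_hom_cong(1)[OF f z g, unfolded comm]]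
          crossed_hom_cong(1)[OF f g z]]
      by (simp add: fz)
    have snd_eq: "[q + s * snd (f (a, b, c, d)) = snd (f (a, b, c, d)) + c * p + d * q] (mod n)"
      using cong_trans[OF cong_sym[OF crossed_hom_cong(2)[OF f z g, unfolded comm]]
          crossed_hom_cong(2)[OF f g z]]
      by (simp add: fz)
    show ?thesis
      by (intro conjI cong_of_diff_eq[OF fst_eq] cong_of_diff_eq[OF snd_eq])
        (simp_all add: algebra_simps)
  qed
  then show "principal_crossed_hom n G (\<lambda>g. vscale n (1 - s) (f g))"
    by (rule principal_crossed_hom_vscaleI[OF \<open>n > 0\<close>])
qed

text \<open>Averaging: summing the cocycle identity f(g h) = f(g) + g f(h) over h \<in> G gives
  |G| f(g) = (g - 1)(-\<Sum>h. f(h)), since left multiplication by g permutes G.\<close>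

lemma H1_annihilated_by_card:
  fixes n :: int
  assumes "n > 0" and "finite G" and perm: "\<And>g. g \<in> G \<Longrightarrow> mat_mult n g ` G = G"
  shows "H1_annihilated_by n G (int (card G))"
  unfolding H1_annihilated_by_def
proof (intro allI impI)
  fix f assume f: "crossed_hom n G f"
  define S1 where "S1 = (\<Sum>h\<in>G. fst (f h))"
  define S2 where "S2 = (\<Sum>h\<in>G. snd (f h))"
  have "[int (card G) * fst (f (a, b, c, d)) = a * - S1 + b * - S2 - - S1] (mod n) \<and>
      [int (card G) * snd (f (a, b, c, d)) = c * - S1 + d * - S2 - - S2] (mod n)"
    if g: "(a, b, c, d) \<in> G" for a b c d
  proof -
    let ?g = "(a, b, c, d)"
    have "inj_on (mat_mult n ?g) G"
      using perm[OF g] \<open>finite G\<close> by (simp add: eq_card_imp_inj_on)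
    then have reindex: "(\<Sum>h\<in>G. \<phi> (f h)) = (\<Sum>h\<in>G. \<phi> (f (mat_mult n ?g h)))"
      for \<phi> :: "vec2 \<Rightarrow> int"
      using sum.reindex[of "mat_mult n ?g" G "\<lambda>h. \<phi> (f h)"] perm[OF g] by simp
    have fst_eq: "[S1 = (\<Sum>h\<in>G. fst (f ?g) + a * fst (f h) + b * snd (f h))] (mod n)"
      unfolding S1_def reindex[of fst] by (intro cong_sum crossed_hom_cong(1)[OF f g])
    have snd_eq: "[S2 = (\<Sum>h\<in>G. snd (f ?g) + c * fst (f h) + d * snd (f h))] (mod n)"
      unfolding S2_def reindex[of snd] by (intro cong_sum crossed_hom_cong(2)[OF f g])
    show ?thesis
      by (intro conjI cong_of_diff_eq[OF fst_eq] cong_of_diff_eq[OF snd_eq])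
        (simp_all add: sum.distrib sum_distrib_left S1_def S2_def algebra_simps)
  qed
  then show "principal_crossed_hom n G (\<lambda>g. vscale n (int (card G)) (f g))"
    by (rule principal_crossed_hom_vscaleI[OF \<open>n > 0\<close>])
qed

lemma SL2_2: "SL2 2 = {(1,0,0,1), (0,1,1,0), (1,1,0,1), (1,0,1,1), (0,1,1,1), (1,1,1,0)}"
proof (rule set_eqI, rule iffI)
  have bit: "x \<in> {0..<2} \<longleftrightarrow> x = 0 \<or> x = 1" for x :: int
    by auto
  fix A assume "A \<in> SL2 2"
  then obtain a b c d where A: "A = (a, b, c, d)"
    and "a = 0 \<or> a = 1" "b = 0 \<or> b = 1" "c = 0 \<or> c = 1" "d = 0 \<or> d = 1"
    and "(a * d - b * c) mod 2 = 1 mod 2"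
    unfolding SL2_def bit by auto
  then show "A \<in> {(1,0,0,1), (0,1,1,0), (1,1,0,1), (1,0,1,1), (0,1,1,1), (1,1,1,0)}"
    by (elim disjE) simp_all
qed (auto simp: SL2_def)

lemma SL2_plus_2: "SL2_plus 2 = {(1,0,0,1), (0,1,1,1), (1,1,1,0)}"
proof -
  note perm_defs = perm_mod2_def encode2_def act_def decode2_def Transposition.transpose_def
  have "perm_mod2 (1,0,0,1) = id"
    by (rule ext) (auto simp: perm_defs)
  moreover have "perm_mod2 (0,1,1,0) = Transposition.transpose 1 2"
    by (rule ext) (auto simp: perm_defs)
  moreover have "perm_mod2 (1,1,0,1) = Transposition.transpose 2 3"
    by (rule ext) (auto simp: perm_defs)
  moreover have "perm_mod2 (1,0,1,1) = Transposition.transpose 1 3"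
    by (rule ext) (auto simp: perm_defs)
  moreover have "perm_mod2 (0,1,1,1) = Transposition.transpose 1 2 \<circ> Transposition.transpose 2 3"
    by (rule ext) (auto simp: perm_defs)
  moreover have "perm_mod2 (1,1,1,0) = Transposition.transpose 2 3 \<circ> Transposition.transpose 1 2"
    by (rule ext) (auto simp: perm_defs)
  ultimately show ?thesis
    by (auto simp: SL2_plus_def SL2_2 sign_compose permutation_swap_id sign_swap_id)
qed

lemma SL2_plus_2_left_mult:
  "g \<in> SL2_plus 2 \<Longrightarrow> mat_mult 2 g ` SL2_plus 2 = SL2_plus 2"
  unfolding SL2_plus_2 by (elim insertE emptyE) (simp_all add: mat_mult_def insert_commute)

lemma perm_mod2_odd_scalar:
  fixes s :: int
  assumes "odd s"
  shows "perm_mod2 (s, 0, 0, s) = id"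
proof (rule ext)
  fix i
  have "s mod 2 = 1"
    using assms by presburger
  then show "perm_mod2 (s, 0, 0, s) i = id i"
    by (auto simp: perm_mod2_def encode2_def act_def decode2_def mod_mult_left_eq[of s, symmetric])
qed

lemma minus_one_in_SL2_plus:
  fixes n :: int
  assumes "even n" and "n > 0"
  shows "(n - 1, 0, 0, n - 1) \<in> SL2_plus n"
proof -
  have "(n - 1) * (n - 1) - 0 * 0 = 1 + n * (n - 2)"
    by (simp add: algebra_simps)
  then have "(n - 1, 0, 0, n - 1) \<in> SL2 n"
    using assms by (auto simp: SL2_def)
  moreover have "odd (n - 1)"
    using assms(1) by simp
  ultimately show ?thesis
    by (simp add: SL2_plus_def perm_mod2_odd_scalar)
qed

theorem lemma4p6:
  fixes r :: nat
  assumes "r \<ge> 1"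
  shows "H1_annihilated_by (2 ^ r) (SL2_plus (2 ^ r)) (2 ^ (r - 1))"
proof (cases "r = 1")
  case True
  have "H1_annihilated_by 2 (SL2_plus 2) (int (card (SL2_plus 2)))"
    using SL2_plus_2_left_mult
    by (rule H1_annihilated_by_card[rotated 2]) (simp_all add: SL2_plus_2)
  then have "H1_annihilated_by 2 (SL2_plus 2) 1"
    by (rule H1_annihilated_by_cong) (simp add: SL2_plus_2 cong_def)
  with True show ?thesis
    by simp
next
  case False
  define n :: int where "n = 2 ^ r"
  have "even n" and "n > 0"
    using assms by (simp_all add: n_def)
  then have "H1_annihilated_by n (SL2_plus n) (1 - (n - 1))"
    by (intro H1_annihilated_by_central_scalar minus_one_in_SL2_plus)
  then have "H1_annihilated_by n (SL2_plus n) 2"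
    by (rule H1_annihilated_by_cong) (simp add: cong_def)
  then have "H1_annihilated_by n (SL2_plus n) (2 ^ (r - 2) * 2)"
    using \<open>n > 0\<close> by (intro H1_annihilated_by_mult)
  moreover have "(2::int) ^ (r - 2) * 2 = 2 ^ (r - 1)"
    using assms False by (simp flip: power_Suc2 add: Suc_diff_Suc numeral_2_eq_2)
  ultimately show ?thesis
    by (simp add: n_def)
qed

end
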